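(* For all integers $n\ge1$, $$\prod_{k=1}^n(1+z^k)=\prod_{j=1}^n\bigl(\phi_{2j}(z)\bigr)^{\lfloor\frac{n+j}{2j}\rfloor},$$ where $\phi_m(z)$ denotes the $m$th cyclotomic polynomial. *)

theory Defs
  imports Complex_Main "HOL-Computational_Algebra.Polynomial"
begin

definition cyclotomic :: "nat \<Rightarrow> complex poly" where
  "cyclotomic m = (\<Prod>k\<in>{k. 1 \<le> k \<and> k \<le> m \<and> coprime k m}.
      [:- cis (2 * pi * real k / real m), 1:])"

end

theory Submission
  imports Defs "HOL-Computational_Algebra.Fundamental_Theorem_Algebra"
begin

text \<open>
  Grouping the m-th roots of unity by their exact order gives
  X^m - 1 = \<Prod>d|m. \<Phi>_d. Hence 1 + X^k = (X^2k - 1) / (X^k - 1) is the product of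
  \<Phi>_d over the d dividing 2k but not k, i.e. over d = 2j with j | k and k/j odd.
  Multiplying over k = 1..n and exchanging the products, \<Phi>_2j occurs once for every
  odd multiple of j up to n, and there are exactly \<lfloor>(n + j) / 2j\<rfloor> of those.
\<close>

lemma gcd_order_fiber_eq_image:
  fixes m d :: nat
  assumes "m > 0" and "d dvd m"
  shows "{k\<in>{1..m}. m div gcd k m = d}
       = (\<lambda>j. j * (m div d)) ` {j. 1 \<le> j \<and> j \<le> d \<and> coprime j d}"
proof -
  obtain e where me: "m = d * e" using \<open>d dvd m\<close> by blast
  have "d > 0" "e > 0" using \<open>m > 0\<close> me by auto
  have gcd_multiple: "gcd (j * e) m = e * gcd j d" for j
    using me by (simp add: gcd_mult_distrib_nat mult.commute)
  have "m div d = e" using me \<open>d > 0\<close> by simp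
  then show ?thesis
  proof (intro equalityI subsetI)
    fix k assume "k \<in> {k\<in>{1..m}. m div gcd k m = d}"
    then have k: "1 \<le> k" "k \<le> m" "m div gcd k m = d" by auto
    then have "m = gcd k m * d" by (metis dvd_mult_div_cancel gcd_dvd2)
    then have "gcd k m = e" using me \<open>d > 0\<close> by (metis mult.commute mult_right_cancel neq0_conv)
    then obtain j where kj: "k = j * e" by (metis dvd_def gcd_dvd1 mult.commute)
    then have "coprime j d"
      using \<open>gcd k m = e\<close> \<open>e > 0\<close> gcd_multiple by (simp add: coprime_iff_gcd_eq_1)
    moreover have "1 \<le> j" using k(1) kj by (cases j) auto
    moreover have "j \<le> d" using k(2) kj me \<open>e > 0\<close> by simp
    ultimately show "k \<in> (\<lambda>j. j * (m div d)) ` {j. 1 \<le> j \<and> j \<le> d \<and> coprime j d}"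
      using kj \<open>m div d = e\<close> by blast
  next
    fix k assume "k \<in> (\<lambda>j. j * (m div d)) ` {j. 1 \<le> j \<and> j \<le> d \<and> coprime j d}"
    then obtain j where j: "1 \<le> j" "j \<le> d" "coprime j d" and kj: "k = j * e"
      using \<open>m div d = e\<close> by blast
    then have "m div gcd k m = d" using gcd_multiple me \<open>e > 0\<close> by simp
    moreover have "1 \<le> k" "k \<le> m" using j kj me \<open>e > 0\<close> by auto
    ultimately show "k \<in> {k\<in>{1..m}. m div gcd k m = d}" by auto
  qed
qed

lemma monom_minus_one_eq_prod_roots_of_unity:
  assumes "m > 0"
  shows "monom (1::complex) m - 1 = (\<Prod>k<m. [:- cis (2 * pi * real k / real m), 1:])"
proof -
  define p where "p = monom (1::complex) m - 1"
  have poly_p: "poly p z = z ^ m - 1" for z by (simp add: p_def poly_monom)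
  have squarefree: "rsquarefree p"
    unfolding rsquarefree_roots
  proof (intro allI notI)
    fix a assume "poly p a = 0 \<and> poly (pderiv p) a = 0"
    then have "a ^ m = 1" "of_nat m * a ^ (m - 1) = 0"
      by (auto simp: poly_p p_def pderiv_diff pderiv_monom poly_monom)
    with \<open>m > 0\<close> show False by (cases "a = 0") (auto simp: power_0_left)
  qed
  have "degree p = m"
  proof -
    have "degree (monom (1::complex) m + - 1) = degree (monom (1::complex) m)"
      by (rule degree_add_eq_left) (use \<open>m > 0\<close> in \<open>simp add: degree_monom_eq\<close>)
    then show ?thesis by (simp add: p_def degree_monom_eq)
  qed
  then have "lead_coeff p = 1" using \<open>m > 0\<close> by (simp add: p_def)
  then have "p = (\<Prod>z | poly p z = 0. [:- z, 1:])"
    using complex_poly_decompose_rsquarefree[OF squarefree] by simp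
  also have "{z. poly p z = 0} = {z. z ^ m = 1}" using poly_p by auto
  also have "(\<Prod>z | z ^ m = (1::complex). [:- z, 1:])
           = (\<Prod>k<m. [:- cis (2 * pi * real k / real m), 1:])"
    using prod.reindex_bij_betw[OF bij_betw_roots_unity[OF \<open>m > 0\<close>], of "\<lambda>z. [:- z, 1:]"]
    by simp
  finally show ?thesis by (simp add: p_def)
qed

lemma monom_minus_one_eq_prod_cyclotomic:
  assumes "m > 0"
  shows "monom (1::complex) m - 1 = (\<Prod>d | d dvd m. cyclotomic d)"
proof -
  define f where "f k = [:- cis (2 * pi * real k / real m), 1:]" for k :: nat
  have "monom (1::complex) m - 1 = (\<Prod>k<m. f k)"
    unfolding f_def by (rule monom_minus_one_eq_prod_roots_of_unity[OF \<open>m > 0\<close>])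
  also have "\<dots> = (\<Prod>k\<in>{1..m}. f k)"
  proof -
    have "{..<m} = insert 0 {1..<m}" "{1..m} = insert m {1..<m}" using \<open>m > 0\<close> by auto
    moreover have "f m = f 0" using \<open>m > 0\<close> by (simp add: f_def complex_eq_iff)
    ultimately show ?thesis by simp
  qed
  also have "\<dots> = (\<Prod>d | d dvd m. \<Prod>k\<in>{k\<in>{1..m}. m div gcd k m = d}. f k)"
  proof (rule prod.group[symmetric])
    show "(\<lambda>k. m div gcd k m) ` {1..m} \<subseteq> {d. d dvd m}"
      by (auto intro: dvd_div_mult_self[symmetric] simp: dvd_def)
  qed (use \<open>m > 0\<close> in auto)
  also have "\<dots> = (\<Prod>d | d dvd m. cyclotomic d)"
  proof (rule prod.cong[OF refl])
    fix d assume "d \<in> {d. d dvd m}"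
    then have "d dvd m" by simp
    then obtain e where me: "m = d * e" by blast
    then have "d > 0" "e > 0" using \<open>m > 0\<close> by auto
    have "inj_on (\<lambda>j. j * (m div d)) {j. 1 \<le> j \<and> j \<le> d \<and> coprime j d}"
      using me \<open>d > 0\<close> \<open>e > 0\<close> by (auto simp: inj_on_def)
    moreover have "f (j * (m div d)) = [:- cis (2 * pi * real j / real d), 1:]" for j
      unfolding f_def using me \<open>d > 0\<close> \<open>e > 0\<close> by (simp add: mult.assoc)
    ultimately show "(\<Prod>k\<in>{k\<in>{1..m}. m div gcd k m = d}. f k) = cyclotomic d"
      using \<open>d dvd m\<close> unfolding gcd_order_fiber_eq_image[OF \<open>m > 0\<close> \<open>d dvd m\<close>] cyclotomic_def
      by (simp add: prod.reindex)
  qed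
  finally show ?thesis .
qed

lemma dvd_double_not_dvd_iff:
  fixes k d :: nat
  assumes "k > 0"
  shows "d dvd 2 * k \<and> \<not> d dvd k \<longleftrightarrow> (\<exists>j. d = 2 * j \<and> j dvd k \<and> odd (k div j))"
proof
  assume d: "d dvd 2 * k \<and> \<not> d dvd k"
  then have "even d" using coprime_dvd_mult_right_iff[of d 2 k] by auto
  then obtain j where "d = 2 * j" by blast
  then obtain q where "k = j * q" using d by auto
  then show "\<exists>j. d = 2 * j \<and> j dvd k \<and> odd (k div j)"
    using d \<open>d = 2 * j\<close> \<open>k > 0\<close> by auto
next
  assume "\<exists>j. d = 2 * j \<and> j dvd k \<and> odd (k div j)"
  then obtain j q where "d = 2 * j" "k = j * q" "odd q" "j > 0"
    using \<open>k > 0\<close> by auto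
  then show "d dvd 2 * k \<and> \<not> d dvd k" by auto
qed

lemma one_plus_monom_eq_prod_cyclotomic:
  assumes "k > 0"
  shows "[:1:] + monom (1::complex) k = (\<Prod>j | j dvd k \<and> odd (k div j). cyclotomic (2 * j))"
proof -
  let ?D = "{d. d dvd 2 * k \<and> \<not> d dvd k}"
  have "finite {d. d dvd k}" using \<open>k > 0\<close> by simp
  have "finite ?D" by (rule finite_subset[of _ "{d. d dvd 2 * k}"]) (use \<open>k > 0\<close> in auto)
  have "{d. d dvd 2 * k} = {d. d dvd k} \<union> ?D" by auto
  then have "monom (1::complex) (2 * k) - 1 = (\<Prod>d | d dvd k. cyclotomic d) * (\<Prod>d\<in>?D. cyclotomic d)"
    using monom_minus_one_eq_prod_cyclotomic[of "2 * k"] \<open>k > 0\<close>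
      prod.union_disjoint[OF \<open>finite {d. d dvd k}\<close> \<open>finite ?D\<close>, of cyclotomic]
    by auto
  also have "monom (1::complex) (2 * k) - 1 = (monom 1 k - 1) * ([:1:] + monom 1 k)"
    by (simp add: algebra_simps mult_monom mult_2 mult_2_right one_pCons)
  finally have "(monom 1 k - 1) * ([:1:] + monom (1::complex) k)
              = (monom 1 k - 1) * (\<Prod>d\<in>?D. cyclotomic d)"
    using monom_minus_one_eq_prod_cyclotomic[OF \<open>k > 0\<close>] by simp
  moreover have "poly (monom (1::complex) k - 1) 0 \<noteq> 0"
    using \<open>k > 0\<close> by (simp add: poly_monom power_0_left)
  ultimately have "[:1:] + monom (1::complex) k = (\<Prod>d\<in>?D. cyclotomic d)"
    by (metis mult_left_cancel poly_0)
  also have "?D = (\<lambda>j. 2 * j) ` {j. j dvd k \<and> odd (k div j)}"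
    using dvd_double_not_dvd_iff[OF \<open>k > 0\<close>] by auto
  finally show ?thesis by (simp add: prod.reindex inj_on_def)
qed

lemma card_odd_multiples_atLeastAtMost:
  fixes j n :: nat
  assumes "j > 0"
  shows "card {k\<in>{1..n}. j dvd k \<and> odd (k div j)} = (n + j) div (2 * j)"
proof -
  have bound: "i < (n + j) div (2 * j) \<longleftrightarrow> j * (2 * i + 1) \<le> n" for i
    using div_less_iff_less_mult[of "2 * j" "n + j" "Suc i"] \<open>j > 0\<close>
    by (simp add: algebra_simps) linarith
  have "{k\<in>{1..n}. j dvd k \<and> odd (k div j)} = (\<lambda>i. j * (2 * i + 1)) ` {..<(n + j) div (2 * j)}"
  proof (intro equalityI subsetI)
    fix k assume "k \<in> {k\<in>{1..n}. j dvd k \<and> odd (k div j)}"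
    then obtain i where k: "k = j * (2 * i + 1)" "k \<le> n"
      using \<open>j > 0\<close> by (auto elim!: dvdE oddE)
    moreover have "i < (n + j) div (2 * j)"
      using bound k by simp
    ultimately show "k \<in> (\<lambda>i. j * (2 * i + 1)) ` {..<(n + j) div (2 * j)}" by blast
  next
    fix k assume "k \<in> (\<lambda>i. j * (2 * i + 1)) ` {..<(n + j) div (2 * j)}"
    then obtain i where "i < (n + j) div (2 * j)" "k = j * (2 * i + 1)" by blast
    then show "k \<in> {k\<in>{1..n}. j dvd k \<and> odd (k div j)}"
      using bound \<open>j > 0\<close> by simp
  qed
  moreover have "inj_on (\<lambda>i. j * (2 * i + 1)) {..<(n + j) div (2 * j)}"
    using \<open>j > 0\<close> by (auto simp: inj_on_def)
  ultimately show ?thesis by (simp add: card_image)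
qed

theorem lemma5:
  fixes n :: nat
  assumes "n \<ge> 1"
  shows "(\<Prod>k=1..n. [:1:] + monom (1::complex) k)
       = (\<Prod>j=1..n. cyclotomic (2 * j) ^ ((n + j) div (2 * j)))"
proof -
  have "(\<Prod>k=1..n. [:1:] + monom (1::complex) k)
      = (\<Prod>k=1..n. \<Prod>j | j \<in> {1..n} \<and> j dvd k \<and> odd (k div j). cyclotomic (2 * j))"
  proof (rule prod.cong[OF refl])
    fix k assume "k \<in> {1..n}"
    then have "{j. j dvd k \<and> odd (k div j)} = {j. j \<in> {1..n} \<and> j dvd k \<and> odd (k div j)}"
      by (auto dest: dvd_imp_le intro: dvd_pos_nat)
    with \<open>k \<in> {1..n}\<close> show "[:1:] + monom (1::complex) k
        = (\<Prod>j | j \<in> {1..n} \<and> j dvd k \<and> odd (k div j). cyclotomic (2 * j))"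
      using one_plus_monom_eq_prod_cyclotomic[of k] by simp
  qed
  also have "\<dots> = (\<Prod>j=1..n. \<Prod>k | k \<in> {1..n} \<and> j dvd k \<and> odd (k div j). cyclotomic (2 * j))"
    by (rule prod.swap_restrict) auto
  also have "\<dots> = (\<Prod>j=1..n. cyclotomic (2 * j) ^ ((n + j) div (2 * j)))"
    using card_odd_multiples_atLeastAtMost by (intro prod.cong) auto
  finally show ?thesis .
qed

end
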